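(* For every real $\lambda$ and $n\in\{0,2\}$, define $$I_n(\lambda)=\int_0^\infty \frac{\operatorname{erfc}\big(\sqrt{s^2+\lambda^2}\big)}{\sqrt{s^2+\lambda^2}}\,s^{n+1}\,ds,\qquad K_n(\lambda)=\int_0^\infty \frac{\phi_3\big(\sqrt{s^2+\lambda^2}\big)}{(s^2+\lambda^2)^{5/2}}\,s^{n+5}\,ds,$$ where $\phi_3(t)=1-s_3(t)$ and $s_3(t)=\operatorname{erf}(t)-\frac{2}{\sqrt\pi}\big(\frac23 t^3+t\big)e^{-t^2}$. Then $$K_0=\tfrac83\,I_0,\qquad K_2=8\,I_2$$ as functions of $\lambda$.
   Context: $\operatorname{erf}(r)=\frac{2}{\sqrt\pi}\int_0^r e^{-s^2}\,ds$ and $\operatorname{erfc}=1-\operatorname{erf}$. *)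

theory Defs
  imports "HOL-Analysis.Analysis"
begin

definition erf :: "real \<Rightarrow> real" where
  "erf r = 2 / sqrt pi * (LBINT s=0..r. exp (- (s^2)))"

definition erfc :: "real \<Rightarrow> real" where
  "erfc r = 1 - erf r"

definition s3 :: "real \<Rightarrow> real" where
  "s3 t = erf t - 2 / sqrt pi * (2/3 * t^3 + t) * exp (- (t^2))"

definition phi3 :: "real \<Rightarrow> real" where
  "phi3 t = 1 - s3 t"

definition I_int :: "nat \<Rightarrow> real \<Rightarrow> real" where
  "I_int n l = (LBINT s:{0<..}. erfc (sqrt (s^2 + l^2)) / sqrt (s^2 + l^2) * s ^ (n + 1))"

definition K_int :: "nat \<Rightarrow> real \<Rightarrow> real" where
  "K_int n l = (LBINT s:{0<..}. phi3 (sqrt (s^2 + l^2)) / (s^2 + l^2) powr (5/2) * s ^ (n + 5))"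

end

(*
  The substitution r = sqrt (s^2 + l^2), with s ds = r dr and s^2 = r^2 - l^2, turns all four
  integrals into integrals over r > |l| of erfc r resp. phi3 r times a Laurent polynomial in r.
  As erfc' and phi3' are Gaussians times polynomials, one integration by parts yields closed-form
  primitives  phi r * P r - exp (- r^2) * W r / sqrt pi  that vanish at infinity, so each integral
  is minus its primitive at r = |l|; at that point the primitives for K_0 and K_2 are exactly
  8/3 and 8 times those for I_0 and I_2.
*)
theory Submission
  imports Defs "HOL-Probability.Distributions" "HOL-Real_Asymp.Real_Asymp"
begin

lemma erf_has_real_derivative: "(erf has_real_derivative 2 / sqrt pi * exp (- (x^2))) (at x)"
proof -
  define b where "b = \<bar>x\<bar> + 1"
  have "((\<lambda>u. LBINT y=ereal 0..ereal u. exp (- (y^2))) has_vector_derivative exp (- (x^2)))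
      (at x within {-b..b})"
    by (rule interval_integral_FTC2) (auto simp: b_def intro!: continuous_intros)
  moreover have "x \<in> interior {-b..b}" by (auto simp: b_def)
  ultimately have "((\<lambda>u. LBINT y=0..u. exp (- (y^2))) has_real_derivative exp (- (x^2))) (at x)"
    by (subst (asm) at_within_interior)
       (auto simp: has_real_derivative_iff_has_vector_derivative zero_ereal_def)
  then show ?thesis
    unfolding erf_def[abs_def] by (rule DERIV_cmult)
qed

lemma erf_tendsto_1: "(erf \<longlongrightarrow> 1) at_top"
proof -
  have "integrable lborel (\<lambda>x::real. indicator {0..} x *\<^sub>R exp (- x\<^sup>2))"
    and half_gauss: "(\<integral>x. indicator {0..} x *\<^sub>R exp (- x\<^sup>2) \<partial>lborel) = sqrt pi / 2"
    using gaussian_moment_0 by (auto simp: has_bochner_integral_iff)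
  from tendsto_integral_at_top[OF sets_lborel this(1)]
  have "((\<lambda>y::real. \<integral>x. indicator {..y} x *\<^sub>R (indicator {0..} x *\<^sub>R exp (- x\<^sup>2)) \<partial>lborel)
      \<longlongrightarrow> sqrt pi / 2) at_top"
    unfolding half_gauss .
  moreover have "\<forall>\<^sub>F y::real in at_top.
      (\<integral>x. indicator {..y} x *\<^sub>R (indicator {0..} x *\<^sub>R exp (- x\<^sup>2)) \<partial>lborel)
      = (LBINT s=0..y. exp (- (s^2)))"
    using eventually_ge_at_top[of "0::real"]
  proof eventually_elim
    case (elim y)
    have "(\<lambda>x::real. indicator {..y} x *\<^sub>R (indicator {0..} x *\<^sub>R exp (- x\<^sup>2)))
        = (\<lambda>x. indicator {0..y} x *\<^sub>R exp (- x\<^sup>2))"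
      by (auto simp: indicator_def)
    then show ?case
      using interval_integral_Icc[OF elim, of "\<lambda>s. exp (- (s^2))"]
      by (simp add: zero_ereal_def set_lebesgue_integral_def)
  qed
  ultimately have "((\<lambda>y::real. LBINT s=0..y. exp (- (s^2))) \<longlongrightarrow> sqrt pi / 2) at_top"
    by (rule Lim_transform_eventually)
  then have "((\<lambda>y::real. 2 / sqrt pi * (LBINT s=0..y. exp (- (s^2)))) \<longlongrightarrow> 2 / sqrt pi * (sqrt pi / 2)) at_top"
    by (rule tendsto_mult_left)
  then show ?thesis
    unfolding erf_def[abs_def] by simp
qed

lemma erfc_has_real_derivative:
  "(erfc has_real_derivative - (2 / sqrt pi) * exp (- (x^2))) (at x)"
  using DERIV_diff[OF DERIV_const erf_has_real_derivative, of 1 x]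
  by (simp add: erfc_def[abs_def])

lemma phi3_eq_erfc: "phi3 t = erfc t + 2 / sqrt pi * (2/3 * t^3 + t) * exp (- (t^2))"
  by (simp add: phi3_def s3_def erfc_def)

lemma phi3_has_real_derivative:
  "(phi3 has_real_derivative - (2 / sqrt pi) * (4/3 * x^4) * exp (- (x^2))) (at x)"
  unfolding phi3_eq_erfc[abs_def]
  by (rule derivative_eq_intros erfc_has_real_derivative refl)+
     (simp add: field_simps power2_eq_square power3_eq_cube power4_eq_xxxx)

lemma isCont_erfc [continuous_intros]: "isCont erfc x"
  using erfc_has_real_derivative by (rule DERIV_isCont)

lemma isCont_phi3 [continuous_intros]: "isCont phi3 x"
  using phi3_has_real_derivative by (rule DERIV_isCont)

lemma erfc_tendsto_0: "(erfc \<longlongrightarrow> 0) at_top"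
  using tendsto_diff[OF tendsto_const erf_tendsto_1, of 1] by (simp add: erfc_def[abs_def])

lemma phi3_tendsto_0: "(phi3 \<longlongrightarrow> 0) at_top"
proof -
  have "((\<lambda>t. 2 / sqrt pi * (2/3 * t^3 + t) * exp (- (t^2))) \<longlongrightarrow> 0) at_top"
    by real_asymp
  from tendsto_add[OF erfc_tendsto_0 this] show ?thesis
    unfolding phi3_eq_erfc[abs_def] by simp
qed

lemma nonneg_if_nonincreasing_tendsto_0:
  fixes f f' :: "real \<Rightarrow> real"
  assumes "\<And>x. x \<ge> t \<Longrightarrow> (f has_real_derivative f' x) (at x)"
    and "\<And>x. x \<ge> t \<Longrightarrow> f' x \<le> 0"
    and "(f \<longlongrightarrow> 0) at_top"
  shows "f t \<ge> 0"
proof -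
  have "\<forall>\<^sub>F x in at_top. f x \<le> f t"
    using eventually_ge_at_top[of t]
    by eventually_elim (rule DERIV_nonpos_imp_nonincreasing, use assms in auto)
  with assms(3) show ?thesis
    by (simp add: tendsto_upperbound)
qed

lemma erfc_nonneg: "erfc t \<ge> 0"
  by (rule nonneg_if_nonincreasing_tendsto_0[OF erfc_has_real_derivative _ erfc_tendsto_0]) simp

lemma phi3_nonneg: "phi3 t \<ge> 0"
  by (rule nonneg_if_nonincreasing_tendsto_0[OF phi3_has_real_derivative _ phi3_tendsto_0]) simp

lemma erfc_le_gaussian_tail_bound:
  assumes "t > 0"
  shows "erfc t \<le> exp (- (t^2)) / (sqrt pi * t)"
proof -
  let ?g = "\<lambda>x. exp (- (x^2)) / (sqrt pi * x) - erfc x"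
  have sqrt_pi: "sqrt pi * (sqrt pi * y) = pi * y" for y
    by (simp flip: mult.assoc)
  have "?g t \<ge> 0"
  proof (rule nonneg_if_nonincreasing_tendsto_0
      [where f = ?g and f' = "\<lambda>x. - (exp (- (x^2)) / (sqrt pi * x^2))"])
    fix x assume "x \<ge> t"
    with assms have "x > 0" by simp
    then show "(?g has_real_derivative - (exp (- (x^2)) / (sqrt pi * x^2))) (at x)"
      by (auto intro!: derivative_eq_intros erfc_has_real_derivative
          simp: field_simps power2_eq_square sqrt_pi)
  next
    have "((\<lambda>x. exp (- (x^2)) / (sqrt pi * x)) \<longlongrightarrow> 0) at_top" by real_asymp
    from tendsto_diff[OF this erfc_tendsto_0] show "(?g \<longlongrightarrow> 0) at_top" by simp
  qed simp
  then show ?thesis by simp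
qed

lemma erfc_mult_tendsto_0:
  fixes P :: "real \<Rightarrow> real"
  assumes "((\<lambda>t. exp (- (t^2)) / t * P t) \<longlongrightarrow> 0) at_top"
  shows "((\<lambda>t. erfc t * P t) \<longlongrightarrow> 0) at_top"
proof (rule Lim_null_comparison)
  show "\<forall>\<^sub>F t in at_top. norm (erfc t * P t) \<le> 1 / sqrt pi * \<bar>exp (- (t^2)) / t * P t\<bar>"
    using eventually_gt_at_top[of 0]
  proof eventually_elim
    case (elim t)
    have "erfc t * \<bar>P t\<bar> \<le> exp (- (t^2)) / (sqrt pi * t) * \<bar>P t\<bar>"
      using erfc_le_gaussian_tail_bound[OF elim] by (rule mult_right_mono) simp
    with elim show ?case
      by (simp add: abs_mult erfc_nonneg)
  qed
  show "((\<lambda>t. 1 / sqrt pi * \<bar>exp (- (t^2)) / t * P t\<bar>) \<longlongrightarrow> 0) at_top"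
    using tendsto_mult_left[OF tendsto_rabs_zero[OF assms], of "1 / sqrt pi"] by simp
qed

lemma set_integral_radial_substitution:
  fixes G h :: "real \<Rightarrow> real"
  assumes "a \<ge> 0"
    and G_deriv: "\<And>r. r > a \<Longrightarrow> (G has_real_derivative h r) (at r)"
    and h_cont: "\<And>r. r > a \<Longrightarrow> isCont h r"
    and h_nonneg: "\<And>r. r > a \<Longrightarrow> h r \<ge> 0"
    and "isCont G a" and "(G \<longlongrightarrow> 0) at_top"
  shows "(LBINT s:{0<..}. h (sqrt (s^2 + a^2)) / sqrt (s^2 + a^2) * s) = - G a"
proof -
  define \<rho> where "\<rho> s = sqrt (s^2 + a^2)" for s
  have \<rho>_gt: "\<rho> s > a" if "s > 0" for s
    using that \<open>a \<ge> 0\<close> real_sqrt_less_mono[of "a^2" "s^2 + a^2"] by (simp add: \<rho>_def)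
  have \<rho>_pos: "\<rho> s > 0" if "s > 0" for s
    using \<rho>_gt[OF that] \<open>a \<ge> 0\<close> by simp
  have \<rho>_deriv: "(\<rho> has_real_derivative s / \<rho> s) (at s)" if "s > 0" for s
    using \<rho>_pos[OF that] unfolding \<rho>_def
    by (auto intro!: derivative_eq_intros simp: field_simps)
  have "(LBINT s=ereal 0..\<infinity>. h (\<rho> s) / \<rho> s * s) = 0 - G a"
  proof (rule interval_integral_FTC_nonneg[where F = "\<lambda>s. G (\<rho> s)"])
    fix s :: real assume "ereal 0 < ereal s"
    then have s: "s > 0" by simp
    show "((\<lambda>s. G (\<rho> s)) has_real_derivative h (\<rho> s) / \<rho> s * s) (at s)"
      using DERIV_chain2[OF G_deriv[OF \<rho>_gt[OF s]] \<rho>_deriv[OF s]] by simp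
    have "isCont \<rho> s"
      using \<rho>_deriv[OF s] by (rule DERIV_isCont)
    then have "isCont (\<lambda>s. h (\<rho> s)) s"
      using h_cont[OF \<rho>_gt[OF s]] by (rule continuous_at_compose[unfolded o_def])
    with \<open>isCont \<rho> s\<close> \<rho>_pos[OF s] show "isCont (\<lambda>s. h (\<rho> s) / \<rho> s * s) s"
      by (intro continuous_intros) auto
  next
    show "AE s in lborel. ereal 0 < ereal s \<longrightarrow> ereal s < \<infinity> \<longrightarrow> 0 \<le> h (\<rho> s) / \<rho> s * s"
      using \<rho>_gt \<rho>_pos h_nonneg
      by (intro AE_I2 impI mult_nonneg_nonneg divide_nonneg_nonneg) (auto intro: less_imp_le)
    have "(\<rho> \<longlongrightarrow> a) (at_right 0)"
      unfolding \<rho>_def using \<open>a \<ge> 0\<close> by (auto intro!: tendsto_eq_intros)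
    then show "(((\<lambda>s. G (\<rho> s)) \<circ> real_of_ereal) \<longlongrightarrow> G a) (at_right (ereal 0))"
      by (simp add: ereal_tendsto_simps isCont_tendsto_compose[OF \<open>isCont G a\<close>])
    have "filterlim \<rho> at_top at_top"
      unfolding \<rho>_def by real_asymp
    then show "(((\<lambda>s. G (\<rho> s)) \<circ> real_of_ereal) \<longlongrightarrow> 0) (at_left \<infinity>)"
      by (simp add: ereal_tendsto_simps filterlim_compose[OF \<open>(G \<longlongrightarrow> 0) at_top\<close>])
  qed simp
  then show ?thesis
    by (simp add: interval_lebesgue_integral_def \<rho>_def)
qed

text \<open>If \<open>\<phi>' = -(2/sqrt pi) q exp(-r^2)\<close>, choosing \<open>W\<close> with \<open>W' = 2 r W - 2 q P\<close> makes the
  Gaussian terms cancel, so \<open>\<phi> P - exp(-r^2) W / sqrt pi\<close> is a primitive of \<open>\<phi> P'\<close>.\<close>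

definition by_parts_primitive ::
    "(real \<Rightarrow> real) \<Rightarrow> (real \<Rightarrow> real) \<Rightarrow> (real \<Rightarrow> real) \<Rightarrow> real \<Rightarrow> real" where
  "by_parts_primitive \<phi> P W r = \<phi> r * P r - exp (- (r^2)) * W r / sqrt pi"

lemma by_parts_primitive_has_real_derivative:
  assumes "(\<phi> has_real_derivative - (2 / sqrt pi) * q * exp (- (r^2))) (at r)"
    and "(P has_real_derivative p) (at r)"
    and "(W has_real_derivative 2 * r * W r - 2 * q * P r) (at r)"
  shows "(by_parts_primitive \<phi> P W has_real_derivative \<phi> r * p) (at r)"
  unfolding by_parts_primitive_def[abs_def]
  by (auto intro!: derivative_eq_intros assms simp: field_simps)

lemma isCont_by_parts_primitive:
  "isCont \<phi> r \<Longrightarrow> isCont P r \<Longrightarrow> isCont W r \<Longrightarrow> isCont (by_parts_primitive \<phi> P W) r"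
  unfolding by_parts_primitive_def[abs_def] by (intro continuous_intros) auto

lemma by_parts_primitive_phi3:
  "by_parts_primitive phi3 P W = by_parts_primitive erfc P (\<lambda>r. W r - 2 * (2/3 * r^3 + r) * P r)"
  by (simp add: by_parts_primitive_def phi3_eq_erfc fun_eq_iff field_simps)

lemma by_parts_primitive_erfc_tendsto_0:
  assumes "((\<lambda>r. exp (- (r^2)) / r * P r) \<longlongrightarrow> 0) at_top"
    and "((\<lambda>r. exp (- (r^2)) * W r) \<longlongrightarrow> 0) at_top"
  shows "(by_parts_primitive erfc P W \<longlongrightarrow> 0) at_top"
  using tendsto_diff[OF erfc_mult_tendsto_0[OF assms(1)] tendsto_divide[OF assms(2) tendsto_const]]
  by (simp add: by_parts_primitive_def[abs_def])

definition I0_primitive :: "real \<Rightarrow> real" where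
  "I0_primitive = by_parts_primitive erfc (\<lambda>r. r) (\<lambda>r. 1)"

definition I2_primitive :: "real \<Rightarrow> real \<Rightarrow> real" where
  "I2_primitive a = by_parts_primitive erfc (\<lambda>r. r^3/3 - a^2 * r) (\<lambda>r. (r^2 + 1 - 3 * a^2) / 3)"

definition K0_primitive :: "real \<Rightarrow> real \<Rightarrow> real" where
  "K0_primitive a = by_parts_primitive phi3
     (\<lambda>r. r + 2 * a^2 / r - a^4 / (3 * r^3))
     (\<lambda>r. 4/3 * (r^4 + 2 * r^2 + 2 + 2 * a^2 * (r^2 + 1) - a^4 / 3))"

definition K2_primitive :: "real \<Rightarrow> real \<Rightarrow> real" where
  "K2_primitive a = by_parts_primitive phi3
     (\<lambda>r. r^3/3 - 3 * a^2 * r - 3 * a^4 / r + a^6 / (3 * r^3))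
     (\<lambda>r. 4/9 * (r^6 + 3 * r^4 + 6 * r^2 + 6) - 4 * a^2 * (r^4 + 2 * r^2 + 2)
          - 4 * a^4 * (r^2 + 1) + 4/9 * a^6)"

lemma I0_primitive_has_real_derivative: "(I0_primitive has_real_derivative erfc r) (at r)"
  unfolding I0_primitive_def
  by (rule by_parts_primitive_has_real_derivative[where q = 1 and p = 1, THEN DERIV_cong])
     (auto intro!: derivative_eq_intros erfc_has_real_derivative[THEN DERIV_cong])

lemma I2_primitive_has_real_derivative:
  "(I2_primitive a has_real_derivative erfc r * (r^2 - a^2)) (at r)"
  unfolding I2_primitive_def
  by (rule by_parts_primitive_has_real_derivative[where q = 1])
     (auto intro!: derivative_eq_intros erfc_has_real_derivative[THEN DERIV_cong]
       simp: field_simps power2_eq_square power3_eq_cube)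

lemma K0_primitive_has_real_derivative:
  assumes "r > 0"
  shows "(K0_primitive a has_real_derivative phi3 r * ((r^2 - a^2) / r^2)^2) (at r)"
  unfolding K0_primitive_def
  by (rule by_parts_primitive_has_real_derivative[OF phi3_has_real_derivative])
     (use assms in \<open>auto intro!: derivative_eq_intros simp: field_simps eval_nat_numeral\<close>)

lemma K2_primitive_has_real_derivative:
  assumes "r > 0"
  shows "(K2_primitive a has_real_derivative phi3 r * ((r^2 - a^2) * ((r^2 - a^2) / r^2)^2)) (at r)"
  unfolding K2_primitive_def
  by (rule by_parts_primitive_has_real_derivative[OF phi3_has_real_derivative])
     (use assms in \<open>auto intro!: derivative_eq_intros simp: field_simps eval_nat_numeral\<close>)

lemma I0_primitive_tendsto_0: "(I0_primitive \<longlongrightarrow> 0) at_top"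
  unfolding I0_primitive_def by (rule by_parts_primitive_erfc_tendsto_0; real_asymp)

lemma I2_primitive_tendsto_0: "(I2_primitive a \<longlongrightarrow> 0) at_top"
  unfolding I2_primitive_def by (rule by_parts_primitive_erfc_tendsto_0; real_asymp)

lemma K0_primitive_tendsto_0: "(K0_primitive a \<longlongrightarrow> 0) at_top"
  unfolding K0_primitive_def by_parts_primitive_phi3
  by (rule by_parts_primitive_erfc_tendsto_0; real_asymp)

lemma K2_primitive_tendsto_0: "(K2_primitive a \<longlongrightarrow> 0) at_top"
  unfolding K2_primitive_def by_parts_primitive_phi3
  by (rule by_parts_primitive_erfc_tendsto_0; real_asymp)

lemma isCont_K0_primitive:
  assumes "a \<ge> 0"
  shows "isCont (K0_primitive a) a"
proof (cases "a = 0")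
  case True
  \<comment> \<open>the terms singular at \<open>r = 0\<close> carry a factor \<open>a\<close> and vanish\<close>
  then show ?thesis
    unfolding K0_primitive_def by (auto intro!: isCont_by_parts_primitive continuous_intros)
next
  case False
  with assms have "a > 0" by simp
  then show ?thesis
    by (rule K0_primitive_has_real_derivative[THEN DERIV_isCont])
qed

lemma isCont_K2_primitive:
  assumes "a \<ge> 0"
  shows "isCont (K2_primitive a) a"
proof (cases "a = 0")
  case True
  then show ?thesis
    unfolding K2_primitive_def by (auto intro!: isCont_by_parts_primitive continuous_intros)
next
  case False
  with assms have "a > 0" by simp
  then show ?thesis
    by (rule K2_primitive_has_real_derivative[THEN DERIV_isCont])
qed

lemma powr_five_halves: "x \<ge> 0 \<Longrightarrow> x powr (5/2) = sqrt x ^ 5"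
  for x :: real
  by (cases "x = 0") (simp_all add: powr_half_sqrt[symmetric] powr_power)

lemma I_int_eq_primitive:
  fixes G :: "real \<Rightarrow> real"
  assumes "\<And>r. r > \<bar>l\<bar> \<Longrightarrow> (G has_real_derivative erfc r * (r^2 - \<bar>l\<bar>^2)^k) (at r)"
    and "isCont G \<bar>l\<bar>" and "(G \<longlongrightarrow> 0) at_top"
  shows "I_int (2 * k) l = - G \<bar>l\<bar>"
proof -
  have "I_int (2 * k) l = (LBINT s:{0<..}. (erfc (sqrt (s^2 + \<bar>l\<bar>^2))
      * (sqrt (s^2 + \<bar>l\<bar>^2)^2 - \<bar>l\<bar>^2)^k) / sqrt (s^2 + \<bar>l\<bar>^2) * s)"
    by (simp add: I_int_def ac_simps flip: power_mult)
  also have "\<dots> = - G \<bar>l\<bar>"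
  proof (rule set_integral_radial_substitution)
    fix r assume "r > \<bar>l\<bar>"
    then have "r^2 - \<bar>l\<bar>^2 \<ge> 0"
      using power_mono[of "\<bar>l\<bar>" r 2] by simp
    then show "erfc r * (r^2 - \<bar>l\<bar>^2)^k \<ge> 0"
      by (simp add: erfc_nonneg)
  qed (use assms in \<open>auto intro: continuous_intros\<close>)
  finally show ?thesis .
qed

lemma K_int_eq_primitive:
  fixes G :: "real \<Rightarrow> real"
  assumes "\<And>r. r > \<bar>l\<bar> \<Longrightarrow> (G has_real_derivative
      phi3 r * ((r^2 - \<bar>l\<bar>^2)^k * ((r^2 - \<bar>l\<bar>^2) / r^2)^2)) (at r)"
    and "isCont G \<bar>l\<bar>" and "(G \<longlongrightarrow> 0) at_top"
  shows "K_int (2 * k) l = - G \<bar>l\<bar>"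
proof -
  have "K_int (2 * k) l = (LBINT s:{0<..}. (phi3 (sqrt (s^2 + \<bar>l\<bar>^2))
      * ((sqrt (s^2 + \<bar>l\<bar>^2)^2 - \<bar>l\<bar>^2)^k
         * ((sqrt (s^2 + \<bar>l\<bar>^2)^2 - \<bar>l\<bar>^2) / sqrt (s^2 + \<bar>l\<bar>^2)^2)^2))
      / sqrt (s^2 + \<bar>l\<bar>^2) * s)"
    by (simp add: K_int_def powr_five_halves power_add power_mult field_split_simps eval_nat_numeral)
  also have "\<dots> = - G \<bar>l\<bar>"
  proof (rule set_integral_radial_substitution)
    fix r assume "r > \<bar>l\<bar>"
    then have "r^2 - \<bar>l\<bar>^2 \<ge> 0" and "r > 0"
      using power_mono[of "\<bar>l\<bar>" r 2] by simp_all
    then show "phi3 r * ((r^2 - \<bar>l\<bar>^2)^k * ((r^2 - \<bar>l\<bar>^2) / r^2)^2) \<ge> 0"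
      and "isCont (\<lambda>r. phi3 r * ((r^2 - \<bar>l\<bar>^2)^k * ((r^2 - \<bar>l\<bar>^2) / r^2)^2)) r"
      by (auto simp: phi3_nonneg intro!: continuous_intros)
  qed (use assms in auto)
  finally show ?thesis .
qed

lemma K0_primitive_diagonal: "K0_primitive a a = 8/3 * I0_primitive a"
  by (cases "a = 0")
     (simp_all add: K0_primitive_def I0_primitive_def by_parts_primitive_phi3
       by_parts_primitive_def field_simps eval_nat_numeral)

lemma K2_primitive_diagonal: "K2_primitive a a = 8 * I2_primitive a a"
  by (cases "a = 0")
     (simp_all add: K2_primitive_def I2_primitive_def by_parts_primitive_phi3
       by_parts_primitive_def field_simps eval_nat_numeral)

lemma I_int_0_eq: "I_int 0 l = - I0_primitive \<bar>l\<bar>"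
  using I_int_eq_primitive[of l I0_primitive 0]
  by (simp add: I0_primitive_has_real_derivative I0_primitive_tendsto_0
      DERIV_isCont[OF I0_primitive_has_real_derivative])

lemma I_int_2_eq: "I_int 2 l = - I2_primitive \<bar>l\<bar> \<bar>l\<bar>"
  using I_int_eq_primitive[of l "I2_primitive \<bar>l\<bar>" 1] I2_primitive_has_real_derivative[of "\<bar>l\<bar>"]
  by (simp add: I2_primitive_tendsto_0 DERIV_isCont[OF I2_primitive_has_real_derivative])

lemma K_int_0_eq: "K_int 0 l = - K0_primitive \<bar>l\<bar> \<bar>l\<bar>"
  using K_int_eq_primitive[of l "K0_primitive \<bar>l\<bar>" 0] K0_primitive_has_real_derivative[of _ "\<bar>l\<bar>"]
  by (simp add: K0_primitive_tendsto_0 isCont_K0_primitive)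

lemma K_int_2_eq: "K_int 2 l = - K2_primitive \<bar>l\<bar> \<bar>l\<bar>"
  using K_int_eq_primitive[of l "K2_primitive \<bar>l\<bar>" 1] K2_primitive_has_real_derivative[of _ "\<bar>l\<bar>"]
  by (simp add: K2_primitive_tendsto_0 isCont_K2_primitive)

theorem mainTheorem4:
  fixes l :: real
  shows "K_int 0 l = 8/3 * I_int 0 l \<and> K_int 2 l = 8 * I_int 2 l"
  by (simp add: I_int_0_eq I_int_2_eq K_int_0_eq K_int_2_eq K0_primitive_diagonal K2_primitive_diagonal)

end
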